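(* Let $\mathbf{f} = (f_n)_{n\ge 1}$ be the ordinary paperfolding word over $\{0,1\}$ and let $\rho(n)$ be its abelian complexity function. Then for all integers $n\ge 0$ (with $n\ge1$ in the first relation) the following hold: \begin{align*} \rho(4n) &= \rho(2n),\\ \rho(4n+2) &= \rho(2n+1)+1,\\ \rho(16n+1) &= \rho(8n+1),\\ \rho(16n+c) &= \rho(2n+1)+2 \quad\text{for each } c\in\{3,7,9,13\},\\ \rho(16n+5) &= \rho(4n+1)+2,\\ \rho(16n+11) &= \rho(4n+3)+2,\\ \rho(16n+15) &= \rho(2n+2)+1. \end{align*}
   Context: The ordinary paperfolding word $\mathbf{f}=(f_n)_{n\ge1}$ over $\{0,1\}$ is defined as follows: for $n\ge 1$ write $n=n'2^k$ with $n'$ odd; then $f_n=0$ if $n'\equiv 1 \pmod 4$ and $f_n=1$ if $n'\equiv 3\pmod 4$. Thus $\mathbf{f}=0010011000110110\cdots$. A factor of $\mathbf{f}$ is a finite contiguous block $f_i f_{i+1}\cdots f_{i+n-1}$. Two words $u,v$ over $\{0,1\}$ are abelian equivalent if one is a rearrangement of the other. For $n\ge1$, the abelian complexity $\rho(n)$ is the number of abelian equivalence classes among the factors of $\mathbf{f}$ of length $n$. *)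

theory Defs
  imports Main "HOL-Library.Multiset"
begin

fun oddpart :: "nat \<Rightarrow> nat" where
  "oddpart n = (if n = 0 then 0 else if even n then oddpart (n div 2) else n)"

(* ordinary paperfolding word f_n, n \<ge> 1 (f_0 unused) *)
definition pf :: "nat \<Rightarrow> nat" where
  "pf n = (if oddpart n mod 4 = 1 then 0 else 1)"

definition pf_factor :: "nat \<Rightarrow> nat \<Rightarrow> nat list" where
  "pf_factor i m = map pf [i..<i+m]"

definition pf_factors :: "nat \<Rightarrow> nat list set" where
  "pf_factors m = {pf_factor i m | i. i \<ge> 1}"

definition abelian_equiv :: "'a list \<Rightarrow> 'a list \<Rightarrow> bool" where
  "abelian_equiv u v \<longleftrightarrow> mset u = mset v"

definition rho :: "nat \<Rightarrow> nat" where
  "rho m = card ((\<lambda>w. {v \<in> pf_factors m. abelian_equiv w v}) ` pf_factors m)"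

end

theory Submission
  imports Defs
begin

text \<open>
  Replace the letters by signs \<open>1 - 2 f\<^sub>j = \<plusminus>1\<close>. A factor of length \<open>m\<close> is determined up to
  abelian equivalence by its sign sum, and sliding the window by one changes the sum by at most 2
  without changing its parity, so \<open>\<rho>(m) = (max - min)/2 + 1\<close> over the sums of length \<open>m\<close>.
  Since \<open>f\<^sub>2\<^sub>k = f\<^sub>k\<close> and \<open>f\<^sub>2\<^sub>k\<^sub>+\<^sub>1\<close> alternates, the maximum of \<open>\<plusminus>\<close>(window sum) over even
  and over odd starting positions satisfies a 2-regular recursion (\<open>extr\<close>). Up to a common
  translation, consecutive values of this recursion come in only six shapes, so the values on
  \<open>[16n, 16n + 16]\<close> are determined by the shape at \<open>n\<close>, and every relation is checked on
  finitely many cases.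
\<close>

section \<open>Sign sums of factors\<close>

declare oddpart.simps[simp del]

lemma oddpart_double: "oddpart (2 * n) = oddpart n"
  by (cases "n = 0") (simp_all add: oddpart.simps[of "2 * n"])

lemma oddpart_odd: "odd n \<Longrightarrow> oddpart n = n"
  by (simp add: oddpart.simps)

definition pf_sign :: "nat \<Rightarrow> int" where
  "pf_sign j = 1 - 2 * int (pf j)"

lemma pf_sign_cases: "pf_sign j = 1 \<or> pf_sign j = -1"
  by (simp add: pf_sign_def pf_def)

lemma pf_sign_double: "pf_sign (2 * n) = pf_sign n"
  by (simp add: pf_sign_def pf_def oddpart_double)

lemma pf_sign_odd: "pf_sign (2 * x + 1) = (if even x then 1 else -1)"
proof -
  have "(2 * x + 1) mod 4 = (if even x then 1 else 3)"
    by (cases "even x") (auto elim!: evenE oddE)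
  then show ?thesis
    by (simp add: pf_sign_def pf_def oddpart_odd)
qed

fun pf_psum :: "nat \<Rightarrow> int" where
  "pf_psum 0 = 0"
| "pf_psum (Suc x) = pf_psum x + pf_sign (Suc x)"

lemma pf_psum_double:
  "pf_psum (2 * x) = pf_psum x + (if odd x then 1 else 0)"
  "pf_psum (2 * x + 1) = pf_psum x + (if even x then 1 else 0)"
proof (induction x)
  case 0
  show "pf_psum (2 * 0) = pf_psum 0 + (if odd (0::nat) then 1 else 0)" by simp
  show "pf_psum (2 * 0 + 1) = pf_psum 0 + (if even (0::nat) then 1 else 0)"
    using pf_sign_odd[of 0] by simp
next
  case (Suc x)
  have "2 * Suc x = Suc (2 * x + 1)" by simp
  then have "pf_psum (2 * Suc x) = pf_psum (2 * x + 1) + pf_sign (Suc x)"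
    using pf_sign_double[of "Suc x"] by (simp only: pf_psum.simps)
  then show "pf_psum (2 * Suc x) = pf_psum (Suc x) + (if odd (Suc x) then 1 else 0)"
    using Suc.IH(2) by simp
  then show "pf_psum (2 * Suc x + 1) = pf_psum (Suc x) + (if even (Suc x) then 1 else 0)"
    using pf_sign_odd[of "Suc x"] by simp
qed

lemma pf_psum_parity: "even (pf_psum x - int x)"
proof (induction x)
  case (Suc x)
  then show ?case using pf_sign_cases[of "Suc x"] by auto
qed simp

text \<open>\<open>wsum a m\<close> is the sign sum of the factor \<open>f\<^sub>a\<^sub>+\<^sub>1 \<dots> f\<^sub>a\<^sub>+\<^sub>m\<close>: the start index is shifted by one.\<close>

definition wsum :: "nat \<Rightarrow> nat \<Rightarrow> int" where
  "wsum a m = pf_psum (a + m) - pf_psum a"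

lemma wsum_parity: "even (wsum a m - int m)"
proof -
  have "wsum a m - int m = (pf_psum (a + m) - int (a + m)) - (pf_psum a - int a)"
    by (simp add: wsum_def)
  then show ?thesis by (metis dvd_diff pf_psum_parity)
qed

lemma wsum_Suc_start: "\<bar>wsum (Suc a) m - wsum a m\<bar> \<le> 2"
proof -
  have "wsum (Suc a) m - wsum a m = pf_sign (Suc (a + m)) - pf_sign (Suc a)"
    by (simp add: wsum_def)
  then show ?thesis using pf_sign_cases[of "Suc (a + m)"] pf_sign_cases[of "Suc a"] by auto
qed

lemma wsum_double_double:
  "wsum (2 * b) (2 * k) = wsum b k + (if odd (b + k) then 1 else 0) - (if odd b then 1 else 0)"
proof -
  have "wsum (2 * b) (2 * k) = pf_psum (2 * (b + k)) - pf_psum (2 * b)"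
    by (simp add: wsum_def algebra_simps)
  then show ?thesis unfolding pf_psum_double by (simp add: wsum_def)
qed

lemma wsum_double_Suc_double:
  "wsum (2 * b + 1) (2 * k) = wsum b k + (if even (b + k) then 1 else 0) - (if even b then 1 else 0)"
proof -
  have "wsum (2 * b + 1) (2 * k) = pf_psum (2 * (b + k) + 1) - pf_psum (2 * b + 1)"
    by (simp add: wsum_def algebra_simps)
  then show ?thesis unfolding pf_psum_double by (simp add: wsum_def)
qed

lemma wsum_double_double_Suc:
  "wsum (2 * b) (2 * k + 1) = wsum b k + (if even (b + k) then 1 else 0) - (if odd b then 1 else 0)"
proof -
  have "wsum (2 * b) (2 * k + 1) = pf_psum (2 * (b + k) + 1) - pf_psum (2 * b)"
    by (simp add: wsum_def algebra_simps)
  then show ?thesis unfolding pf_psum_double by (simp add: wsum_def)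
qed

lemma wsum_double_Suc_double_Suc:
  "wsum (2 * b + 1) (2 * k + 1) = wsum b (k + 1) + (if odd (b + k + 1) then 1 else 0) - (if even b then 1 else 0)"
proof -
  have "wsum (2 * b + 1) (2 * k + 1) = pf_psum (2 * (b + (k + 1))) - pf_psum (2 * b + 1)"
    by (simp add: wsum_def algebra_simps)
  then show ?thesis unfolding pf_psum_double by (simp add: wsum_def)
qed

lemma wsum_eq_sum_list_pf_factor: "wsum a m = int m - 2 * int (sum_list (pf_factor (a + 1) m))"
proof (induction m)
  case (Suc m)
  have "pf_factor (a + 1) (Suc m) = pf_factor (a + 1) m @ [pf (a + 1 + m)]"
    by (simp add: pf_factor_def)
  with Suc show ?case by (simp add: wsum_def pf_sign_def)
qed (simp add: wsum_def pf_factor_def)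

lemma mset_eq_iff_sum_list_eq_01:
  fixes u v :: "nat list"
  assumes "set u \<subseteq> {0, 1}" "set v \<subseteq> {0, 1}" "length u = length v"
  shows "mset u = mset v \<longleftrightarrow> sum_list u = sum_list v"
proof
  have count_01: "count (mset w) 1 = sum_list w" "count (mset w) 0 + sum_list w = length w"
    if "set w \<subseteq> {0, 1::nat}" for w
    using that by (induction w) auto
  assume sum_eq: "sum_list u = sum_list v"
  show "mset u = mset v"
  proof (rule multiset_eqI)
    fix x
    show "count (mset u) x = count (mset v) x"
    proof (cases "x \<in> {0, 1}")
      case True
      then show ?thesis using count_01[OF assms(1)] count_01[OF assms(2)] sum_eq assms(3) by auto
    next
      case False
      then have "x \<notin> set u" "x \<notin> set v" using assms(1,2) by auto
      then show ?thesis by (metis count_eq_zero_iff set_mset_mset)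
    qed
  qed
qed (metis sum_mset_sum_list)

lemma rho_eq_card_wsum: "rho m = card (range (\<lambda>a. wsum a m))"
proof -
  define F where "F = pf_factors m"
  have F_eq: "F = (\<lambda>a. pf_factor (a + 1) m) ` UNIV"
  proof -
    have "pf_factor i m \<in> range (\<lambda>a. pf_factor (a + 1) m)" if "i \<ge> 1" for i
      using that by (intro image_eqI[of _ _ "i - 1"]) simp_all
    then show ?thesis unfolding F_def pf_factors_def by auto
  qed
  have F_01: "set w \<subseteq> {0, 1} \<and> length w = m" if "w \<in> F" for w
    using that unfolding F_eq pf_factor_def pf_def by auto
  define cls where "cls s = {v \<in> F. sum_list v = s}" for s
  have "{v \<in> F. abelian_equiv w v} = cls (sum_list w)" if "w \<in> F" for w
    using F_01[OF that] F_01 mset_eq_iff_sum_list_eq_01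
    unfolding cls_def abelian_equiv_def by fastforce
  then have "(\<lambda>w. {v \<in> F. abelian_equiv w v}) ` F = cls ` sum_list ` F"
    by (auto simp: image_image cong: image_cong)
  then have "rho m = card (cls ` sum_list ` F)"
    unfolding rho_def F_def[symmetric] by simp
  also have "\<dots> = card (sum_list ` F)"
    by (rule card_image) (auto simp: inj_on_def cls_def)
  also have "\<dots> = card ((\<lambda>s. int m - 2 * int s) ` sum_list ` F)"
    by (rule card_image[symmetric]) (auto simp: inj_on_def)
  also have "(\<lambda>s. int m - 2 * int s) ` sum_list ` F = range (\<lambda>a. wsum a m)"
    unfolding F_eq image_image wsum_eq_sum_list_pf_factor ..
  finally show ?thesis .
qed

section \<open>Attained maxima and discrete intervals\<close>

definition attains_max :: "('a \<Rightarrow> 'b::linorder) \<Rightarrow> ('a \<Rightarrow> bool) \<Rightarrow> 'b \<Rightarrow> bool" where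
  "attains_max f P x \<longleftrightarrow> (\<forall>a. P a \<longrightarrow> f a \<le> x) \<and> (\<exists>a. P a \<and> f a = x)"

lemma attains_max_disj:
  assumes "attains_max f P x" "attains_max f Q y"
  shows "attains_max f (\<lambda>a. P a \<or> Q a) (max x y)"
  using assms unfolding attains_max_def by (metis max.coboundedI1 max.coboundedI2 max_def)

lemma attains_max_interleave:
  fixes F V :: "nat \<Rightarrow> 'b::linordered_ab_group_add"
  assumes "attains_max F even x" "attains_max F odd y"
    and V: "\<And>b. V (2 * b + of_bool r) = F b + (if even b then c else - c)"
  shows "attains_max V (\<lambda>a. odd a = r) (max (x + c) (y - c))"
  unfolding attains_max_def
proof (intro conjI allI impI)
  fix a :: nat assume "odd a = r"
  then have "V a = F (a div 2) + (if even (a div 2) then c else - c)"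
    using V[of "a div 2"] by (metis odd_two_times_div_two_succ even_two_times_div_two of_bool_eq(1,2) add_0_right)
  moreover have "F (a div 2) \<le> (if even (a div 2) then x else y)"
    using assms(1,2) unfolding attains_max_def by simp
  ultimately show "V a \<le> max (x + c) (y - c)"
    by (cases "even (a div 2)") (simp_all add: le_max_iff_disj)
next
  obtain b0 b1 where "even b0" "F b0 = x" "odd b1" "F b1 = y"
    using assms(1,2) unfolding attains_max_def by blast
  then have "V (2 * b0 + of_bool r) = x + c" "V (2 * b1 + of_bool r) = y - c" using V by simp_all
  moreover have "odd (2 * b0 + of_bool r) = r" "odd (2 * b1 + of_bool r) = r" by simp_all
  ultimately show "\<exists>a. odd a = r \<and> V a = max (x + c) (y - c)"
    by (metis max_def)
qed

lemma step2_intermediate_value: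
  fixes f :: "nat \<Rightarrow> int"
  assumes step: "\<And>i. \<bar>f (Suc i) - f i\<bar> \<le> 2" and parity: "\<And>i. even (f i - c)"
    and "i \<le> j" "even (v - c)" "min (f i) (f j) \<le> v" "v \<le> max (f i) (f j)"
  shows "\<exists>k. f k = v"
  using assms(3-)
proof (induction j rule: dec_induct)
  case (step n)
  show ?case
  proof (cases "min (f i) (f n) \<le> v \<and> v \<le> max (f i) (f n)")
    case True
    then show ?thesis using step.IH \<open>even (v - c)\<close> by blast
  next
    case False
    then have "f n < v \<and> v \<le> f (Suc n) \<or> f (Suc n) \<le> v \<and> v < f n"
      using step.prems by linarith
    moreover have "even (v - f n)" "even (f (Suc n) - v)"
      using parity[of n] parity[of "Suc n"] \<open>even (v - c)\<close> by simp_all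
    then obtain p q where "v - f n = 2 * p" "f (Suc n) - v = 2 * q" by (elim evenE)
    ultimately have "v = f (Suc n)"
      using assms(1)[of n] by presburger
    then show ?thesis by blast
  qed
qed auto

lemma card_range_step2:
  fixes f :: "nat \<Rightarrow> int"
  assumes step: "\<And>i. \<bar>f (Suc i) - f i\<bar> \<le> 2" and parity: "\<And>i. even (f i - c)"
    and "attains_max f (\<lambda>_. True) hi" "attains_max (\<lambda>i. - f i) (\<lambda>_. True) lo"
  shows "int (card (range f)) = (hi + lo) div 2 + 1"
proof -
  have bounds: "- lo \<le> f a \<and> f a \<le> hi" for a
    using assms(3,4) unfolding attains_max_def by auto
  obtain i j where ij: "f i = hi" "f j = - lo"
    using assms(3,4) unfolding attains_max_def by (metis minus_minus)
  have "even (hi + lo)"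
    using parity[of i] parity[of j] ij by simp
  have "0 \<le> hi + lo" using bounds[of i] ij by simp
  obtain h where h: "hi + lo = 2 * h" using \<open>even (hi + lo)\<close> by (elim evenE)
  define K where "K = nat h"
  have K: "hi + lo = 2 * int K" using h \<open>0 \<le> hi + lo\<close> by (simp add: K_def)
  have "range f = (\<lambda>k. 2 * int k - lo) ` {0..K}"
  proof (intro equalityI subsetI)
    fix v assume "v \<in> range f"
    then obtain a where "v = f a" by blast
    have "even (f a + lo)" using parity[of a] parity[of j] ij by simp
    then obtain m where m: "f a + lo = 2 * m" by (elim evenE)
    then have "0 \<le> m" "m \<le> int K" using bounds[of a] K by auto
    then show "v \<in> (\<lambda>k. 2 * int k - lo) ` {0..K}"
      using \<open>v = f a\<close> m by (intro image_eqI[of _ _ "nat m"]) auto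
  next
    fix v assume "v \<in> (\<lambda>k. 2 * int k - lo) ` {0..K}"
    then obtain k where k: "k \<le> K" "v = 2 * int k - lo" by auto
    have "even (v - c)" using parity[of j] ij k by simp
    moreover have "min (f i) (f j) \<le> v" "v \<le> max (f i) (f j)" using ij K k by auto
    ultimately have "\<exists>a. f a = v"
      using step2_intermediate_value[where f = f, OF step parity, of i j v]
        step2_intermediate_value[where f = f, OF step parity, of j i v]
      by (cases "i \<le> j") (simp_all add: min.commute max.commute)
    then show "v \<in> range f" by auto
  qed
  moreover have "inj_on (\<lambda>k. 2 * int k - lo) {0..K}" by (auto simp: inj_on_def)
  ultimately have "card (range f) = K + 1" by (simp add: card_image)
  then show ?thesis using K by simp
qed

section \<open>A recursion for the extremal sign sums\<close>

definition bsign :: "bool \<Rightarrow> int" where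
  "bsign t = (if t then 1 else -1)"

definition mix :: "int \<Rightarrow> int \<times> int \<Rightarrow> int" where
  "mix c p = max (fst p + c) (snd p - c)"

definition double_step :: "bool \<Rightarrow> bool \<Rightarrow> int \<times> int \<Rightarrow> int \<times> int" where
  "double_step t b p = (let c = if b then bsign t else 0 in (mix c p, mix (- c) p))"

definition double_Suc_step :: "bool \<Rightarrow> bool \<Rightarrow> int \<times> int \<Rightarrow> int \<times> int \<Rightarrow> int \<times> int" where
  "double_Suc_step t b p q = (mix (if b then 0 else bsign t) p, mix (if b then - bsign t else 0) q)"

text \<open>\<open>fst (extr t m)\<close> and \<open>snd (extr t m)\<close> will be the maxima of \<open>bsign t * wsum a m\<close> over even
  and over odd starts \<open>a\<close> (lemma \<open>extr_correct\<close>); the steps come from the recursions for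
  \<open>wsum (2b + i) (2k + j)\<close>.\<close>

function extr :: "bool \<Rightarrow> nat \<Rightarrow> int \<times> int" where
  "extr t n = (if n = 0 then (0, 0) else if n = 1 then (1, 1)
     else if even n then double_step t (odd (n div 2)) (extr t (n div 2))
     else double_Suc_step t (odd (n div 2)) (extr t (n div 2)) (extr t (n div 2 + 1)))"
  by pat_completeness auto
termination by (relation "measure snd") (auto elim: oddE)

declare extr.simps[simp del]

lemma extr_0: "extr t 0 = (0, 0)"
  by (simp add: extr.simps)

lemma extr_1: "extr t 1 = (1, 1)"
  by (simp add: extr.simps)

lemma extr_double: "extr t (2 * k) = double_step t (odd k) (extr t k)"
proof (cases "k = 0")
  case True
  then show ?thesis by (simp add: extr_0 double_step_def mix_def)
next
  case False
  then show ?thesis by (subst extr.simps) simp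
qed

lemma extr_double_Suc: "extr t (2 * k + 1) = double_Suc_step t (odd k) (extr t k) (extr t (k + 1))"
proof (cases "k = 0")
  case True
  then show ?thesis
    using extr_1[of t] by (simp add: extr_0 double_Suc_step_def mix_def bsign_def)
next
  case False
  then show ?thesis by (subst extr.simps) simp
qed

definition extr_correct :: "bool \<Rightarrow> nat \<Rightarrow> bool" where
  "extr_correct t m \<longleftrightarrow> attains_max (\<lambda>a. bsign t * wsum a m) even (fst (extr t m))
     \<and> attains_max (\<lambda>a. bsign t * wsum a m) odd (snd (extr t m))"

lemma attains_max_interleave_wsum:
  assumes "extr_correct t k"
    and V: "\<And>b. V (2 * b + of_bool r) = bsign t * wsum b k + (if even b then c else - c)"
  shows "attains_max V (\<lambda>a. odd a = r) (mix c (extr t k))"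
  using attains_max_interleave[of "\<lambda>b. bsign t * wsum b k", OF _ _ V] assms(1)
  unfolding extr_correct_def mix_def by blast

lemma extr_correct_double:
  assumes "extr_correct t k"
  shows "extr_correct t (2 * k)"
proof -
  define c where "c = (if odd k then bsign t else 0)"
  have "bsign t * wsum (2 * b) (2 * k) = bsign t * wsum b k + (if even b then c else - c)" for b
    unfolding wsum_double_double c_def by (auto simp: ring_distribs)
  then have "attains_max (\<lambda>a. bsign t * wsum a (2 * k)) even (mix c (extr t k))"
    using attains_max_interleave_wsum[OF assms, of _ False] by simp
  moreover have "bsign t * wsum (2 * b + 1) (2 * k) = bsign t * wsum b k + (if even b then - c else c)" for b
    unfolding wsum_double_Suc_double c_def by (auto simp: ring_distribs)
  then have "attains_max (\<lambda>a. bsign t * wsum a (2 * k)) odd (mix (- c) (extr t k))"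
    using attains_max_interleave_wsum[OF assms, of _ True] by simp
  ultimately show ?thesis
    unfolding extr_correct_def extr_double double_step_def c_def
    by (simp add: Let_def)
qed

lemma extr_correct_double_Suc:
  assumes "extr_correct t k" "extr_correct t (k + 1)"
  shows "extr_correct t (2 * k + 1)"
proof -
  define c where "c = (if odd k then 0 else bsign t)"
  define d where "d = (if odd k then - bsign t else 0)"
  have "bsign t * wsum (2 * b) (2 * k + 1) = bsign t * wsum b k + (if even b then c else - c)" for b
    unfolding wsum_double_double_Suc c_def by (auto simp: ring_distribs)
  then have "attains_max (\<lambda>a. bsign t * wsum a (2 * k + 1)) even (mix c (extr t k))"
    using attains_max_interleave_wsum[OF assms(1), of _ False] by simp
  moreover have "bsign t * wsum (2 * b + 1) (2 * k + 1) = bsign t * wsum b (k + 1) + (if even b then d else - d)" for b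
    unfolding wsum_double_Suc_double_Suc d_def by (auto simp: ring_distribs)
  then have "attains_max (\<lambda>a. bsign t * wsum a (2 * k + 1)) odd (mix d (extr t (k + 1)))"
    using attains_max_interleave_wsum[OF assms(2), of _ True] by simp
  ultimately show ?thesis
    unfolding extr_correct_def extr_double_Suc double_Suc_step_def c_def d_def
    by simp
qed

lemma extr_correct_0: "extr_correct t 0"
  unfolding extr_correct_def attains_max_def extr_0 wsum_def by (auto intro: exI[of _ 1])

lemma extr_correct_1: "extr_correct t 1"
proof -
  have wsum_1: "wsum a 1 = pf_sign (a + 1)" for a
    by (simp add: wsum_def)
  have bound: "bsign t * wsum a 1 \<le> 1" for a
    unfolding wsum_1 using pf_sign_cases[of "a + 1"] by (auto simp: bsign_def)
  have "pf_sign 1 = 1" "pf_sign 2 = 1" "pf_sign 3 = -1" "pf_sign 6 = -1"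
    using pf_sign_odd[of 0] pf_sign_odd[of 1] pf_sign_double[of 1] pf_sign_double[of 3] by simp_all
  moreover have "wsum 0 1 = pf_sign 1" "wsum 1 1 = pf_sign 2" "wsum 2 1 = pf_sign 3" "wsum 5 1 = pf_sign 6"
    unfolding wsum_1 by (simp_all add: numeral_eq_Suc)
  ultimately have "wsum 0 1 = 1" "wsum 1 1 = 1" "wsum 2 1 = -1" "wsum 5 1 = -1"
    by simp_all
  then have "bsign t * wsum (if t then 0 else 2) 1 = 1" "bsign t * wsum (if t then 1 else 5) 1 = 1"
    by (simp_all add: bsign_def)
  moreover have "even (if t then 0 else 2 :: nat)" "odd (if t then 1 else 5 :: nat)" by simp_all
  ultimately show ?thesis
    using bound unfolding extr_correct_def attains_max_def extr_1 by (metis fst_conv snd_conv)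
qed

lemma extr_correct: "extr_correct t m"
proof (induction m rule: less_induct)
  case (less m)
  consider "m = 0" | "m = 1" | k where "m = 2 * k" "k \<ge> 1" | k where "m = 2 * k + 1" "k \<ge> 1"
    by (metis evenE oddE One_nat_def less_one not_less mult_0_right add_0)
  then show ?case
  proof cases
    case 2
    then show ?thesis using extr_correct_1 by (simp only:)
  next
    case 3
    then show ?thesis using less extr_correct_double by simp
  next
    case 4
    then show ?thesis using less extr_correct_double_Suc by simp
  qed (simp add: extr_correct_0)
qed

section \<open>Shapes of consecutive values\<close>

fun refine :: "bool \<Rightarrow> bool \<Rightarrow> (int \<times> int) list \<Rightarrow> (int \<times> int) list" where
  "refine t b [] = []"
| "refine t b [p] = [double_step t b p]"
| "refine t b (p # q # r) = double_step t b p # double_Suc_step t b p q # refine t (\<not> b) (q # r)"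

lemma map_extr_double:
  "map (extr t) [2 * N..<2 * N + 2 * L + 1] = refine t (odd N) (map (extr t) [N..<N + L + 1])"
proof (induction L arbitrary: N)
  case 0
  then show ?case by (simp add: extr_double)
next
  case (Suc L)
  have "[2 * N..<2 * N + 2 * Suc L + 1] = 2 * N # (2 * N + 1) # [2 * (N + 1)..<2 * (N + 1) + 2 * L + 1]"
    by (simp add: upt_conv_Cons del: upt_Suc)
  moreover have "[N..<N + Suc L + 1] = N # (N + 1) # [N + 2..<(N + 1) + L + 1]"
    by (simp add: upt_conv_Cons del: upt_Suc)
  moreover have "[N + 1..<(N + 1) + L + 1] = (N + 1) # [N + 2..<(N + 1) + L + 1]"
    by (simp add: upt_conv_Cons del: upt_Suc)
  ultimately show ?case
    using Suc.IH[of "N + 1"] by (simp del: upt_Suc add: extr_double extr_double_Suc[simplified])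
qed

definition shift :: "int \<Rightarrow> int \<times> int \<Rightarrow> int \<times> int" where
  "shift x p = (x + fst p, x + snd p)"

lemma mix_shift: "mix c (shift x p) = x + mix c p"
  by (simp add: mix_def shift_def max_add_distrib_right algebra_simps)

lemma double_step_shift: "double_step t b (shift x p) = shift x (double_step t b p)"
  unfolding double_step_def Let_def mix_shift by (simp add: shift_def)

lemma double_Suc_step_shift: "double_Suc_step t b (shift x p) (shift x q) = shift x (double_Suc_step t b p q)"
  unfolding double_Suc_step_def mix_shift by (simp add: shift_def)

lemma refine_shift: "refine t b (map (shift x) ps) = map (shift x) (refine t b ps)"
  by (induction t b ps rule: refine.induct) (simp_all add: double_step_shift double_Suc_step_shift)

lemma map_extr_double_shift:
  assumes "map (extr t) [N..<N + L + 1] = map (shift x) U"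
  shows "map (extr t) [2 * N..<2 * N + 2 * L + 1] = map (shift x) (refine t (odd N) U)"
  using map_extr_double[of t N L] unfolding assms refine_shift .

definition shape :: "int \<times> int \<Rightarrow> int \<times> int \<Rightarrow> (int \<times> int) list" where
  "shape p q = [(0, snd p - fst p), (fst q - fst p, snd q - fst p)]"

lemma pair_eq_shift_shape: "[p, q] = map (shift (fst p)) (shape p q)"
  by (simp add: shape_def shift_def)

lemma shape_shift: "shape (shift x p) (shift x q) = shape p q"
  by (simp add: shape_def shift_def)

text \<open>The orbit of \<open>shape (extr t 0) (extr t 1) = [(0, 0), (1, 1)]\<close> under refinement.\<close>

definition shapes :: "(int \<times> int) list list" where
  "shapes = [[(0, -2), (-1, -1)], [(0, 0), (-1, -1)], [(0, 0), (-1, 1)],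
             [(0, 0), (1, -1)], [(0, 0), (1, 1)], [(0, 2), (1, 1)]]"

lemma refine_shapes:
  assumes "sh \<in> set shapes"
  shows "shape (refine t b sh ! 0) (refine t b sh ! 1) \<in> set shapes
    \<and> shape (refine t b sh ! 1) (refine t b sh ! 2) \<in> set shapes"
  using assms unfolding shapes_def
  by (simp only: set_simps insert_iff empty_iff, cases t; cases b; elim disjE;
      simp add: double_step_def double_Suc_step_def mix_def bsign_def shape_def shapes_def Let_def)

lemma shape_extr: "shape (extr t n) (extr t (n + 1)) \<in> set shapes"
proof (induction n rule: less_induct)
  case (less n)
  show ?case
  proof (cases "n = 0")
    case True
    then show ?thesis by (simp add: extr_0 extr_1[unfolded One_nat_def] shape_def shapes_def)
  next
    case False
    define k where "k = n div 2"
    define sh where "sh = shape (extr t k) (extr t (k + 1))"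
    have "sh \<in> set shapes" using less False by (simp add: sh_def k_def)
    have "map (extr t) [k..<k + 1 + 1] = map (shift (fst (extr t k))) sh"
      using pair_eq_shift_shape unfolding sh_def by (simp add: upt_conv_Cons)
    then have "map (extr t) [2 * k..<2 * k + 2 * 1 + 1] = map (shift (fst (extr t k))) (refine t (odd k) sh)"
      by (rule map_extr_double_shift)
    then have "[extr t (2 * k), extr t (2 * k + 1), extr t (2 * k + 2)]
        = map (shift (fst (extr t k))) (refine t (odd k) sh)"
      by (simp add: upt_conv_Cons)
    moreover have "length (refine t (odd k) sh) = 3"
      using \<open>sh \<in> set shapes\<close> by (auto simp: shapes_def)
    ultimately have "shape (extr t (2 * k)) (extr t (2 * k + 1)) \<in> set shapes
        \<and> shape (extr t (2 * k + 1)) (extr t (2 * k + 2)) \<in> set shapes"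
      using refine_shapes[OF \<open>sh \<in> set shapes\<close>, of t "odd k"]
      by (auto simp: length_Suc_conv shape_shift)
    moreover have "n = 2 * k \<or> n = 2 * k + 1" by (simp add: k_def) presburger
    ultimately show ?thesis by (auto simp: add.assoc)
  qed
qed

definition pmax :: "int \<times> int \<Rightarrow> int" where
  "pmax p = max (fst p) (snd p)"

text \<open>Only the first refinement depends on the parity of the start; the later ones start at the even
  points \<open>2n\<close>, \<open>4n\<close>, \<open>8n\<close>.\<close>

lemma refine_relations:
  fixes t b :: bool
  assumes "sh \<in> set shapes"
  defines "U2 \<equiv> refine t b sh"
  defines "U4 \<equiv> refine t False U2"
  defines "U8 \<equiv> refine t False U4"
  defines "U16 \<equiv> refine t False U8"
  shows "pmax (U4 ! 0) = pmax (U2 ! 0) \<and> pmax (U4 ! 2) = pmax (U2 ! 1) + 1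
    \<and> pmax (U16 ! 1) = pmax (U8 ! 1)
    \<and> pmax (U16 ! 3) = pmax (U2 ! 1) + 2 \<and> pmax (U16 ! 7) = pmax (U2 ! 1) + 2
    \<and> pmax (U16 ! 9) = pmax (U2 ! 1) + 2 \<and> pmax (U16 ! 13) = pmax (U2 ! 1) + 2
    \<and> pmax (U16 ! 5) = pmax (U4 ! 1) + 2 \<and> pmax (U16 ! 11) = pmax (U4 ! 3) + 2
    \<and> pmax (U16 ! 15) = pmax (U2 ! 2) + 1"
  using assms(1) unfolding shapes_def U16_def U8_def U4_def U2_def
  by (simp only: set_simps insert_iff empty_iff, cases t; cases b; elim disjE;
      simp add: double_step_def double_Suc_step_def mix_def bsign_def pmax_def Let_def)

section \<open>Abelian complexity\<close>

definition extr_max :: "bool \<Rightarrow> nat \<Rightarrow> int" where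
  "extr_max t m = pmax (extr t m)"

lemma extr_max_window:
  assumes "map (extr t) [a..<a + L + 1] = map (shift x) U" "c \<le> L"
  shows "extr_max t (a + c) = x + pmax (U ! c)"
proof -
  have "extr t (a + c) = map (extr t) [a..<a + L + 1] ! c"
    using assms(2) by (simp del: upt_Suc)
  also have "\<dots> = shift x (U ! c)"
    using arg_cong[OF assms(1), of length] assms by (simp del: upt_Suc)
  finally have "extr t (a + c) = shift x (U ! c)" .
  then show ?thesis by (simp add: extr_max_def pmax_def shift_def)
qed

lemma extr_max_relations:
  "extr_max t (4 * n) = extr_max t (2 * n)
   \<and> extr_max t (4 * n + 2) = extr_max t (2 * n + 1) + 1
   \<and> extr_max t (16 * n + 1) = extr_max t (8 * n + 1)
   \<and> extr_max t (16 * n + 3) = extr_max t (2 * n + 1) + 2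
   \<and> extr_max t (16 * n + 7) = extr_max t (2 * n + 1) + 2
   \<and> extr_max t (16 * n + 9) = extr_max t (2 * n + 1) + 2
   \<and> extr_max t (16 * n + 13) = extr_max t (2 * n + 1) + 2
   \<and> extr_max t (16 * n + 5) = extr_max t (4 * n + 1) + 2
   \<and> extr_max t (16 * n + 11) = extr_max t (4 * n + 3) + 2
   \<and> extr_max t (16 * n + 15) = extr_max t (2 * n + 2) + 1"
proof -
  define x where "x = fst (extr t n)"
  define sh where "sh = shape (extr t n) (extr t (n + 1))"
  define U2 where "U2 = refine t (odd n) sh"
  define U4 where "U4 = refine t False U2"
  define U8 where "U8 = refine t False U4"
  define U16 where "U16 = refine t False U8"
  have "map (extr t) [n..<n + 1 + 1] = map (shift x) sh"
    using pair_eq_shift_shape unfolding x_def sh_def by (simp add: upt_conv_Cons)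
  note w2 = map_extr_double_shift[OF this]
  note w4 = map_extr_double_shift[OF w2]
  note w8 = map_extr_double_shift[OF w4]
  note w16 = map_extr_double_shift[OF w8]
  have e2: "extr_max t (2 * n + c) = x + pmax (U2 ! c)" if "c \<le> 2" for c
    using extr_max_window[OF w2, of c] that by (simp add: U2_def)
  have e4: "extr_max t (4 * n + c) = x + pmax (U4 ! c)" if "c \<le> 4" for c
    using extr_max_window[OF w4, of c] that by (simp add: U4_def U2_def)
  have e8: "extr_max t (8 * n + c) = x + pmax (U8 ! c)" if "c \<le> 8" for c
    using extr_max_window[OF w8, of c] that by (simp add: U8_def U4_def U2_def)
  have e16: "extr_max t (16 * n + c) = x + pmax (U16 ! c)" if "c \<le> 16" for c
    using extr_max_window[OF w16, of c] that by (simp add: U16_def U8_def U4_def U2_def)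
  show ?thesis
    using refine_relations[OF shape_extr[of t n, folded sh_def], of t "odd n", folded U2_def U4_def U8_def U16_def]
      e2[of 0] e2[of 1] e2[of 2] e4[of 0] e4[of 1] e4[of 2] e4[of 3] e8[of 1]
      e16[of 1] e16[of 3] e16[of 5] e16[of 7] e16[of 9] e16[of 11] e16[of 13] e16[of 15]
    by simp
qed

lemma attains_max_extr_max: "attains_max (\<lambda>a. bsign t * wsum a m) (\<lambda>_. True) (extr_max t m)"
proof -
  have "attains_max (\<lambda>a. bsign t * wsum a m) (\<lambda>a. even a \<or> odd a) (pmax (extr t m))"
    using extr_correct[of t m] unfolding extr_correct_def pmax_def by (elim conjE) (rule attains_max_disj)
  then show ?thesis by (simp add: extr_max_def)
qed

lemma rho_eq_extr_max: "int (rho m) = (extr_max True m + extr_max False m) div 2 + 1"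
  unfolding rho_eq_card_wsum
  by (rule card_range_step2[where f = "\<lambda>a. wsum a m", OF wsum_Suc_start wsum_parity])
    (use attains_max_extr_max[of True m] attains_max_extr_max[of False m] in \<open>simp_all add: bsign_def\<close>)

lemma rho_eq_add:
  assumes "extr_max True a + extr_max False a = extr_max True b + extr_max False b + 2 * int k"
  shows "rho a = rho b + k"
  using rho_eq_extr_max[of a] rho_eq_extr_max[of b] assms by simp

theorem theorem2:
  fixes n :: nat
  shows "(n \<ge> 1 \<longrightarrow> rho (4*n) = rho (2*n))
    \<and> rho (4*n+2) = rho (2*n+1) + 1
    \<and> rho (16*n+1) = rho (8*n+1)
    \<and> (\<forall>c\<in>{3,7,9,13}. rho (16*n+c) = rho (2*n+1) + 2)
    \<and> rho (16*n+5) = rho (4*n+1) + 2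
    \<and> rho (16*n+11) = rho (4*n+3) + 2
    \<and> rho (16*n+15) = rho (2*n+2) + 1"
proof -
  note rel = extr_max_relations[of True n] extr_max_relations[of False n]
  have "rho (4*n) = rho (2*n) + 0" by (rule rho_eq_add) (use rel in simp)
  moreover have "rho (4*n+2) = rho (2*n+1) + 1" by (rule rho_eq_add) (use rel in simp)
  moreover have "rho (16*n+1) = rho (8*n+1) + 0" by (rule rho_eq_add) (use rel in simp)
  moreover have "rho (16*n+3) = rho (2*n+1) + 2" by (rule rho_eq_add) (use rel in simp)
  moreover have "rho (16*n+7) = rho (2*n+1) + 2" by (rule rho_eq_add) (use rel in simp)
  moreover have "rho (16*n+9) = rho (2*n+1) + 2" by (rule rho_eq_add) (use rel in simp)
  moreover have "rho (16*n+13) = rho (2*n+1) + 2" by (rule rho_eq_add) (use rel in simp)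
  moreover have "rho (16*n+5) = rho (4*n+1) + 2" by (rule rho_eq_add) (use rel in simp)
  moreover have "rho (16*n+11) = rho (4*n+3) + 2" by (rule rho_eq_add) (use rel in simp)
  moreover have "rho (16*n+15) = rho (2*n+2) + 1" by (rule rho_eq_add) (use rel in simp)
  ultimately show ?thesis by simp
qed

end
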